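(* Let $I$ be a finite tree and let $\Sigma_{i_1}\Sigma_{i_2}\cdots\Sigma_{i_p}$ be a reduced expression for a morphism of $R_0(I)$ from an arbitrary orientation of $I$ to $\Gamma_0$ or $\Gamma_0^{\mathrm{op}}$. Then for every letter $i$ occurring in the word $i_1\cdots i_p$, exactly one of the following holds: (i) no $j$ adjacent to $i$ occurs to the left of the leftmost occurrence of $i$; (ii) every $j$ adjacent to $i$ occurs exactly once to the left of the leftmost occurrence of $i$.
   Context: Let $I$ be a finite tree. $\mathrm{Quiv}(I)$ is the set of orientations of $I$; $\Gamma_0$ is an alternating orientation (every vertex a source or sink) and $\Gamma_0^{\mathrm{op}}$ its opposite. For $\Gamma\in\mathrm{Quiv}(I)$ and a source or sink $i$ of $\Gamma$, $s_i\Gamma$ is the orientation obtained by reversing all arrows at $i$. The groupoid $R_0(I)$ has object set $\mathrm{Quiv}(I)$ and is generated by elementary isomorphisms $\Sigma_i:\Gamma\to s_i\Gamma$ (for each $\Gamma$ and each source or sink $i$ of $\Gamma$) subject to the relations, whenever both sides are defined: (R1) $\Sigma_i^2=1$; (R2) $\Sigma_i\Sigma_j=\Sigma_j\Sigma_i$ when $i,j$ are not adjacent. Composition is right-to-left, so in $\Sigma_{i_1}\cdots\Sigma_{i_p}$ the rightmost factor $\Sigma_{i_p}$ is applied first and the leftmost factor $\Sigma_{i_1}$ last. An expression for a morphism $\Sigma$ is a composable word equal to $\Sigma$; $\ell(\Sigma)$ is the minimal length of an expression, and an expression of length $\ell(\Sigma)$ is called reduced. *)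

theory Defs
  imports Main
begin

definition is_cycle :: "('a \<Rightarrow> 'a \<Rightarrow> bool) \<Rightarrow> 'a list \<Rightarrow> bool" where
  "is_cycle E c \<longleftrightarrow> length c \<ge> 3 \<and> distinct c
     \<and> (\<forall>k. Suc k < length c \<longrightarrow> E (c ! k) (c ! Suc k))
     \<and> E (last c) (hd c)"

definition is_tree :: "'a set \<Rightarrow> ('a \<Rightarrow> 'a \<Rightarrow> bool) \<Rightarrow> bool" where
  "is_tree V E \<longleftrightarrow> finite V \<and> V \<noteq> {}
     \<and> (\<forall>x y. E x y \<longrightarrow> x \<in> V \<and> y \<in> V)
     \<and> (\<forall>x y. E x y \<longrightarrow> E y x) \<and> (\<forall>x. \<not> E x x)
     \<and> (\<forall>x\<in>V. \<forall>y\<in>V. E\<^sup>*\<^sup>* x y)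
     \<and> (\<nexists>c. is_cycle E c)"

text \<open>An orientation: Q a b means an arrow a \<rightarrow> b; each edge carries exactly one arrow.\<close>

definition orientation :: "'a set \<Rightarrow> ('a \<Rightarrow> 'a \<Rightarrow> bool) \<Rightarrow> ('a \<Rightarrow> 'a \<Rightarrow> bool) \<Rightarrow> bool" where
  "orientation V E Q \<longleftrightarrow> (\<forall>a b. Q a b \<longrightarrow> E a b) \<and> (\<forall>a b. E a b \<longrightarrow> (Q a b \<noteq> Q b a))"

definition is_source :: "('a \<Rightarrow> 'a \<Rightarrow> bool) \<Rightarrow> 'a \<Rightarrow> bool" where
  "is_source Q i \<longleftrightarrow> (\<forall>j. \<not> Q j i)"

definition is_sink :: "('a \<Rightarrow> 'a \<Rightarrow> bool) \<Rightarrow> 'a \<Rightarrow> bool" where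
  "is_sink Q i \<longleftrightarrow> (\<forall>j. \<not> Q i j)"

definition srcsink :: "'a set \<Rightarrow> ('a \<Rightarrow> 'a \<Rightarrow> bool) \<Rightarrow> 'a \<Rightarrow> bool" where
  "srcsink V Q i \<longleftrightarrow> i \<in> V \<and> (is_source Q i \<or> is_sink Q i)"

definition alternating :: "'a set \<Rightarrow> ('a \<Rightarrow> 'a \<Rightarrow> bool) \<Rightarrow> bool" where
  "alternating V Q \<longleftrightarrow> (\<forall>i\<in>V. is_source Q i \<or> is_sink Q i)"

definition opp :: "('a \<Rightarrow> 'a \<Rightarrow> bool) \<Rightarrow> ('a \<Rightarrow> 'a \<Rightarrow> bool)" where
  "opp Q = (\<lambda>a b. Q b a)"

definition refl_at :: "'a \<Rightarrow> ('a \<Rightarrow> 'a \<Rightarrow> bool) \<Rightarrow> ('a \<Rightarrow> 'a \<Rightarrow> bool)" where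
  "refl_at i Q = (\<lambda>a b. if a = i \<or> b = i then Q b a else Q a b)"

text \<open>Words are written as in the paper: [i1,...,ip] stands for
Sigma_i1 ... Sigma_ip, so the LAST list element is applied first.
applied_ok checks a list in order of application.\<close>

fun applied_ok :: "'a set \<Rightarrow> ('a \<Rightarrow> 'a \<Rightarrow> bool) \<Rightarrow> 'a list \<Rightarrow> bool" where
  "applied_ok V Q [] = True"
| "applied_ok V Q (i # is) = (srcsink V Q i \<and> applied_ok V (refl_at i Q) is)"

definition composable :: "'a set \<Rightarrow> ('a \<Rightarrow> 'a \<Rightarrow> bool) \<Rightarrow> 'a list \<Rightarrow> bool" where
  "composable V Q w \<longleftrightarrow> applied_ok V Q (rev w)"

definition target :: "('a \<Rightarrow> 'a \<Rightarrow> bool) \<Rightarrow> 'a list \<Rightarrow> ('a \<Rightarrow> 'a \<Rightarrow> bool)" where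
  "target Q w = fold refl_at (rev w) Q"

inductive R0_step :: "'a set \<Rightarrow> ('a \<Rightarrow> 'a \<Rightarrow> bool) \<Rightarrow> ('a \<Rightarrow> 'a \<Rightarrow> bool)
    \<Rightarrow> 'a list \<Rightarrow> 'a list \<Rightarrow> bool" for V E Q where
  R1: "composable V Q (u @ [i, i] @ v) \<Longrightarrow> composable V Q (u @ v)
       \<Longrightarrow> R0_step V E Q (u @ [i, i] @ v) (u @ v)"
| R2: "\<not> E i j \<Longrightarrow> composable V Q (u @ [i, j] @ v) \<Longrightarrow> composable V Q (u @ [j, i] @ v)
       \<Longrightarrow> R0_step V E Q (u @ [i, j] @ v) (u @ [j, i] @ v)"

definition R0_equiv :: "'a set \<Rightarrow> ('a \<Rightarrow> 'a \<Rightarrow> bool) \<Rightarrow> ('a \<Rightarrow> 'a \<Rightarrow> bool)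
    \<Rightarrow> 'a list \<Rightarrow> 'a list \<Rightarrow> bool" where
  "R0_equiv V E Q = equivclp (R0_step V E Q)"

definition reduced :: "'a set \<Rightarrow> ('a \<Rightarrow> 'a \<Rightarrow> bool) \<Rightarrow> ('a \<Rightarrow> 'a \<Rightarrow> bool) \<Rightarrow> 'a list \<Rightarrow> bool" where
  "reduced V E Q w \<longleftrightarrow> composable V Q w
     \<and> (\<forall>w'. composable V Q w' \<and> R0_equiv V E Q w w' \<longrightarrow> length w \<le> length w')"

end

theory Submission
  imports Defs
begin

(* Write w = u i r with i not in u. Since s_j reverses the arrows at j, the arrow on an edge
   {a, b} of target Q w is that of Q reversed once for every occurrence of a or b in w. The
   vertex i is a source or sink when Sigma_i is applied and again in the alternating target,
   so all neighbours of i occur in u with the same parity. On the other hand, in a reduced word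
   every neighbour of v occurs between two consecutive occurrences of v: otherwise (by induction
   on the gap) either no neighbour occurs in the gap, so the two letters v commute together
   and cancel by (R1), or some neighbour occurs exactly once while another does not, and then v
   is neither a source nor a sink when it is applied the second time. Hence each neighbour of i
   occurs at most once in u, and since i has a neighbour, either none or all of them occur. *)

lemma refl_at_refl_at [simp]: "refl_at i (refl_at i Q) = Q"
  by (auto simp: refl_at_def fun_eq_iff)

lemma refl_at_commute: "refl_at i (refl_at j Q) = refl_at j (refl_at i Q)"
  by (auto simp: refl_at_def fun_eq_iff)

lemma target_Nil [simp]: "target Q [] = Q"
  by (simp add: target_def)

lemma target_Cons [simp]: "target Q (i # w) = refl_at i (target Q w)"
  by (simp add: target_def)

lemma target_append: "target Q (u @ w) = target (target Q w) u"
  by (simp add: target_def)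

lemma target_apply:
  "target Q w a b = (if even (count_list w a + count_list w b) then Q a b else Q b a)"
proof (induction w arbitrary: a b)
  case Nil
  then show ?case by simp
next
  case (Cons c w)
  have "target Q (c # w) a b = (if a = c \<or> b = c then target Q w b a else target Q w a b)"
    by (simp add: refl_at_def)
  then show ?case
    by (simp only: Cons.IH) (cases "a = c"; cases "b = c"; simp)
qed

lemma composable_append:
  "composable V Q (u @ w) \<longleftrightarrow> composable V Q w \<and> composable V (target Q w) u"
proof -
  have "applied_ok V Q (p @ s) \<longleftrightarrow> applied_ok V Q p \<and> applied_ok V (fold refl_at p Q) s" for p s
    by (induction p arbitrary: Q) auto
  then show ?thesis
    by (simp add: composable_def target_def)
qed

lemma composable_Cons [simp]:
  "composable V Q (i # w) \<longleftrightarrow> composable V Q w \<and> srcsink V (target Q w) i"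
  using composable_append[of V Q "[i]" w] by (simp add: composable_def)

lemma composable_subset: "composable V Q w \<Longrightarrow> set w \<subseteq> V"
  by (induction w) (auto simp: srcsink_def)

lemma orientation_irrefl: "orientation V E Q \<Longrightarrow> \<not> E a a"
  by (auto simp: orientation_def)

lemma orientation_target:
  assumes "orientation V E Q" "symp E"
  shows "orientation V E (target Q w)"
  unfolding orientation_def
proof (intro conjI allI impI)
  fix a b
  assume "target Q w a b"
  then have "Q a b \<or> Q b a"
    by (simp add: target_apply split: if_splits)
  then show "E a b"
    using assms by (auto simp: orientation_def dest: sympD)
next
  fix a b
  assume "E a b"
  then show "target Q w a b \<noteq> target Q w b a"
    using assms(1) by (simp add: target_apply orientation_def add.commute)
qed

lemma is_source_opp [simp]: "is_source (opp Q) i \<longleftrightarrow> is_sink Q i"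
  by (simp add: is_source_def is_sink_def opp_def)

lemma is_sink_opp [simp]: "is_sink (opp Q) i \<longleftrightarrow> is_source Q i"
  by (simp add: is_source_def is_sink_def opp_def)

lemma srcsink_refl_at_nonadjacent:
  assumes "orientation V E Q" "symp E" "\<not> E v z"
  shows "srcsink V (refl_at v Q) z \<longleftrightarrow> srcsink V Q z"
proof (cases "v = z")
  case True
  then show ?thesis by (auto simp: srcsink_def is_source_def is_sink_def refl_at_def)
next
  case False
  have "\<not> Q v z" "\<not> Q z v"
    using assms by (auto simp: orientation_def dest: sympD)
  with False show ?thesis
    by (auto simp: srcsink_def is_source_def is_sink_def refl_at_def)
qed

lemma composable_swap:
  assumes "orientation V E G" "symp E" "\<not> E v z"
    and "composable V G (q @ [v, z] @ p)"
  shows "composable V G (q @ [z, v] @ p)"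
proof -
  define Q where "Q = target G p"
  have "orientation V E Q"
    using assms(1,2) by (simp add: Q_def orientation_target)
  moreover have "\<not> E z v"
    using assms(2,3) by (auto dest: sympD)
  ultimately have "srcsink V (refl_at v Q) z \<longleftrightarrow> srcsink V Q z"
    "srcsink V (refl_at z Q) v \<longleftrightarrow> srcsink V Q v"
    using assms(2,3) by (simp_all add: srcsink_refl_at_nonadjacent)
  with assms(4) show ?thesis
    by (auto simp: composable_append target_append Q_def[symmetric] refl_at_commute[of z v])
qed

lemma odd_flips_not_srcsink:
  assumes "orientation V E Q" "is_source Q i \<or> is_sink Q i" "E i x" "E i y"
    and "odd (count_list w x + count_list w y)"
  shows "\<not> is_source (target Q w) i \<and> \<not> is_sink (target Q w) i"
proof -
  have "Q i x \<noteq> Q x i" "Q i y \<noteq> Q y i"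
    using assms(1,3,4) by (auto simp: orientation_def)
  moreover have "even (count_list w i + count_list w x) \<noteq> even (count_list w i + count_list w y)"
    using assms(5) by auto
  ultimately have "target Q w i x \<noteq> target Q w i y" "target Q w x i \<noteq> target Q w y i"
    using assms(2) by (auto simp: target_apply is_source_def is_sink_def)
  then show ?thesis
    by (auto simp: is_source_def is_sink_def)
qed

lemma R0_equiv_cancel_pair:
  assumes "orientation V E G" "symp E" "\<forall>y\<in>set m. \<not> E v y"
    and "composable V G (q @ [v] @ m @ [v] @ p)"
  shows "composable V G (q @ m @ p) \<and> R0_equiv V E G (q @ [v] @ m @ [v] @ p) (q @ m @ p)"
  using assms(3,4)
proof (induction m arbitrary: q)
  case Nil
  then have "composable V G (q @ p)"
    by (simp add: composable_append target_append)
  moreover have "R0_step V E G (q @ [v, v] @ p) (q @ p)"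
    using Nil.prems(2) \<open>composable V G (q @ p)\<close> by (intro R0_step.R1) simp_all
  ultimately show ?case
    by (auto simp: R0_equiv_def)
next
  case (Cons z m)
  have "\<not> E v z"
    using Cons.prems(1) by simp
  have "composable V G (q @ [z, v] @ m @ [v] @ p)"
    using composable_swap[OF assms(1,2) \<open>\<not> E v z\<close>] Cons.prems(2) by simp
  then have "R0_step V E G (q @ [v, z] @ m @ [v] @ p) (q @ [z, v] @ m @ [v] @ p)"
    using Cons.prems(2) \<open>\<not> E v z\<close> by (intro R0_step.R2) simp_all
  then have step: "R0_equiv V E G (q @ [v] @ (z # m) @ [v] @ p) ((q @ [z]) @ [v] @ m @ [v] @ p)"
    by (auto simp: R0_equiv_def)
  have "composable V G ((q @ [z]) @ m @ p)
      \<and> R0_equiv V E G ((q @ [z]) @ [v] @ m @ [v] @ p) ((q @ [z]) @ m @ p)"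
    using Cons.IH[of "q @ [z]"] Cons.prems(1) \<open>composable V G (q @ [z, v] @ m @ [v] @ p)\<close>
    by simp
  with step show ?case
    unfolding R0_equiv_def by (auto intro: equivclp_trans)
qed

lemma reduced_neighbour_between:
  assumes "orientation V E G" "symp E"
  shows "reduced V E G (q @ [v] @ m @ [v] @ p) \<Longrightarrow> v \<notin> set m \<Longrightarrow> E v x \<Longrightarrow> x \<in> set m"
proof (induction "length m" arbitrary: q m p v x rule: less_induct)
  case less
  have red: "composable V G (q @ [v] @ m @ [v] @ p)"
    "\<And>w'. composable V G w' \<Longrightarrow> R0_equiv V E G (q @ [v] @ m @ [v] @ p) w'
       \<Longrightarrow> length (q @ [v] @ m @ [v] @ p) \<le> length w'"
    using less.prems(1) by (auto simp: reduced_def)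
  show ?case
  proof (cases "\<exists>y\<in>set m. E v y")
    case False
    then have "composable V G (q @ m @ p) \<and> R0_equiv V E G (q @ [v] @ m @ [v] @ p) (q @ m @ p)"
      using R0_equiv_cancel_pair[OF assms _ red(1)] by blast
    with red(2)[of "q @ m @ p"] show ?thesis
      by simp
  next
    case True
    then obtain y where y: "y \<in> set m" "E v y"
      by blast
    then obtain m1 m2 where m: "m = m1 @ y # m2" "y \<notin> set m1"
      by (meson split_list_first)
    show ?thesis
    proof (cases "y \<in> set m2")
      case True
      then obtain m3 m4 where m2: "m2 = m3 @ y # m4" "y \<notin> set m3"
        by (meson split_list_first)
      have "reduced V E G ((q @ [v] @ m1) @ [y] @ m3 @ [y] @ (m4 @ [v] @ p))"
        using less.prems(1) m m2 by simp
      moreover have "E y v"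
        using assms(2) y(2) by (blast dest: sympD)
      ultimately have "v \<in> set m3"
        using less.hyps[of m3 "q @ [v] @ m1" y "m4 @ [v] @ p" v] m m2 by simp
      with less.prems(2) m m2 show ?thesis
        by simp
    next
      case False
      show ?thesis
      proof (rule ccontr)
        assume "x \<notin> set m"
        define Q where "Q = target G p"
        have "srcsink V Q v" "srcsink V (target Q (m @ [v])) v"
          using red(1) by (simp_all add: composable_append target_append Q_def)
        moreover have "orientation V E Q"
          using assms by (simp add: Q_def orientation_target)
        moreover have "odd (count_list (m @ [v]) x + count_list (m @ [v]) y)"
          using \<open>x \<notin> set m\<close> False m less.prems(2) y(1)
            orientation_irrefl[OF assms(1), of v] less.prems(3) by auto
        ultimately show False
          using odd_flips_not_srcsink[of V E Q v x y "m @ [v]"] less.prems(3) y(2)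
          by (auto simp: srcsink_def)
      qed
    qed
  qed
qed

lemma reduced_count_neighbour_le_1:
  assumes "orientation V E G" "symp E" "reduced V E G (u @ i # r)" "i \<notin> set u" "E i j"
  shows "count_list u j \<le> 1"
proof (rule ccontr)
  assume "\<not> count_list u j \<le> 1"
  then have "count_list u j = Suc (Suc (count_list u j - 2))"
    by arith
  from count_list_Suc_split_first[OF this] obtain u1 t
    where u: "u = u1 @ j # t" "count_list t j = Suc (count_list u j - 2)"
    by blast
  from count_list_Suc_split_first[OF u(2)] obtain u2 u3
    where t: "t = u2 @ j # u3" "j \<notin> set u2"
    by blast
  have "reduced V E G (u1 @ [j] @ u2 @ [j] @ (u3 @ i # r))"
    using assms(3) u t by simp
  moreover have "E j i"
    using assms(2,5) by (blast dest: sympD)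
  ultimately have "i \<in> set u2"
    using reduced_neighbour_between[OF assms(1,2)] t(2) by blast
  with assms(4) u t show False
    by simp
qed

lemma srcsink_target_neighbour_parity:
  assumes "orientation V E G" "symp E" "composable V G (u @ i # r)" "i \<notin> set u"
    and "is_source (target G (u @ i # r)) i \<or> is_sink (target G (u @ i # r)) i"
    and "E i j" "E i j'"
  shows "even (count_list u j + count_list u j')"
proof (rule ccontr)
  assume odd: "odd (count_list u j + count_list u j')"
  define Q where "Q = target G r"
  have Q: "orientation V E Q"
    using assms(1,2) by (simp add: Q_def orientation_target)
  have i: "is_source Q i \<or> is_sink Q i"
    using assms(3) by (simp add: composable_append Q_def srcsink_def)
  have "j \<noteq> i" "j' \<noteq> i"
    using orientation_irrefl[OF assms(1), of i] assms(6,7) by auto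
  with odd have "odd (count_list (u @ [i]) j + count_list (u @ [i]) j')"
    by simp
  from odd_flips_not_srcsink[OF Q i assms(6,7) this] assms(5) show False
    by (simp add: Q_def target_append)
qed

lemma connected_has_neighbour:
  assumes "\<forall>x\<in>V. \<forall>y\<in>V. E\<^sup>*\<^sup>* x y" "card V \<ge> 2" "i \<in> V"
  shows "\<exists>j. E i j"
proof -
  have "V \<noteq> {i}"
    using assms(2) by auto
  with assms(3) obtain j where "j \<in> V" "j \<noteq> i"
    by blast
  with assms(1,3) have "E\<^sup>*\<^sup>* i j" "i \<noteq> j"
    by auto
  then show ?thesis
    by (cases rule: converse_rtranclpE) auto
qed

theorem mainTheorem17:
  fixes V :: "'a set" and E G G0 :: "'a \<Rightarrow> 'a \<Rightarrow> bool" and w :: "'a list" and i :: 'a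
  assumes "is_tree V E" and "card V \<ge> 2"
    and "orientation V E G0" and "alternating V G0"
    and "orientation V E G"
    and "reduced V E G w"
    and "target G w = G0 \<or> target G w = opp G0"
    and "i \<in> set w"
  shows "(\<forall>j. E i j \<longrightarrow> j \<notin> set (takeWhile (\<lambda>k. k \<noteq> i) w))
     \<noteq> (\<forall>j. E i j \<longrightarrow> count_list (takeWhile (\<lambda>k. k \<noteq> i) w) j = 1)"
proof -
  have sym: "symp E" and conn: "\<forall>x\<in>V. \<forall>y\<in>V. E\<^sup>*\<^sup>* x y"
    using assms(1) by (auto simp: is_tree_def intro: sympI)
  obtain u r where w: "w = u @ i # r" "i \<notin> set u"
    using assms(8) by (meson split_list_first)
  then have u: "takeWhile (\<lambda>k. k \<noteq> i) w = u"
    by (simp add: takeWhile_append)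
  have comp: "composable V G w"
    using assms(6) by (simp add: reduced_def)
  then have "i \<in> V"
    using assms(8) composable_subset by blast
  then obtain j1 where j1: "E i j1"
    using connected_has_neighbour[OF conn assms(2)] by blast
  have "is_source (target G w) i \<or> is_sink (target G w) i"
    using assms(4,7) \<open>i \<in> V\<close> by (auto simp: alternating_def)
  then have parity: "even (count_list u j + count_list u j1)" if "E i j" for j
    using srcsink_target_neighbour_parity[OF assms(5) sym _ w(2) _ that j1] comp w by simp
  have at_most_once: "count_list u j \<le> 1" if "E i j" for j
    using reduced_count_neighbour_le_1[OF assms(5) sym _ w(2) that] assms(6) w by simp
  have same_count: "count_list u j = count_list u j1" if "E i j" for j
    using parity[OF that] at_most_once[OF that] at_most_once[OF j1] by (auto simp: le_Suc_eq)
  have "(\<forall>j. E i j \<longrightarrow> j \<notin> set u) \<longleftrightarrow> count_list u j1 = 0"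
    using same_count j1 by (metis count_list_0_iff)
  moreover have "(\<forall>j. E i j \<longrightarrow> count_list u j = 1) \<longleftrightarrow> count_list u j1 = 1"
    using same_count j1 by metis
  ultimately show ?thesis
    using at_most_once[OF j1] unfolding u by auto
qed

end
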